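(* Let $f:X\to\mathcal G$ be a function and $x_0\in\operatorname{dom} f$. The following are equivalent: (a) $f(x_0)\in\operatorname{Min}f[X]$, i.e. for all $x\in X$, $f(x)\supseteq f(x_0)$ implies $f(x)=f(x_0)$; (b) for all $x\in X$ with $f(x)\ne f(x_0)$ there is $z^*\in C^-\setminus\{0\}$ with $\varphi_{f,z^*}(x_0)<\varphi_{f,z^*}(x)$; (c) for all $x\in X$ with $f(x)\ne f(x_0)$ there is $z^*\in C^-\setminus\{0\}$ with $\varphi_{f,z^*}(x)\neq-\infty$ and $\varphi_{f,z^*}(x_0)\ominus\varphi_{f,z^*}(x)<0$; (d) for all $x\in X$ with $f(x)\ne f(x_0)$ there is $z^*\in C^-\setminus\{0\}$ with $0<\varphi_{f,z^*}(x)\ominus\varphi_{f,z^*}(x_0)$; (e) for all $x\in X$ with $f(x)\neq f(x_0)$: $0\notin f(x)\ominus f(x_0)$.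
   Context: $X$ real linear space, $Z$ real locally convex Hausdorff space with dual $Z^*$, $C\subseteq Z$ closed convex cone, $0\in C$, $C^-=\{z^*:z^*(c)\le0\ \forall c\in C\}$, $C^-\setminus\{0\}\ne\emptyset$. $\mathcal G=\{A\subseteq Z:A=\operatorname{cl}\operatorname{co}(A+C)\}$; $A\ominus B=\{z\in Z:B+\{z\}\subseteq A\}$; $\operatorname{dom}f=\{x:f(x)\ne\emptyset\}$. On $\overline{\mathbb R}$: inf-addition $\dot+$ ($(-\infty)\dot+(+\infty)=+\infty$), $r\ominus s=\inf\{t\in\mathbb R:r\le s\dot+t\}$ ($\inf\emptyset=+\infty$). $\varphi_{f,z^*}(x)=\inf\{-z^*(z):z\in f(x)\}$ ($+\infty$ if $f(x)=\emptyset$). *)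

theory Defs
  imports "HOL-Analysis.Analysis" "HOL-Library.Extended_Real"
begin

definition locally_convex_tvs :: "'z::{real_vector,t2_space} itself \<Rightarrow> bool" where
  "locally_convex_tvs _ \<longleftrightarrow>
     continuous_on UNIV (\<lambda>p::'z \<times> 'z. fst p + snd p) \<and>
     continuous_on UNIV (\<lambda>p::real \<times> 'z. fst p *\<^sub>R snd p) \<and>
     (\<forall>U::'z set. open U \<and> 0 \<in> U \<longrightarrow> (\<exists>V. open V \<and> convex V \<and> 0 \<in> V \<and> V \<subseteq> U))"

definition top_dual :: "('z::{real_vector,topological_space} \<Rightarrow> real) set" where
  "top_dual = {g. linear g \<and> continuous_on UNIV g}"

definition neg_polar :: "'z::{real_vector,topological_space} set \<Rightarrow> ('z \<Rightarrow> real) set" where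
  "neg_polar C = {g \<in> top_dual. \<forall>c\<in>C. g c \<le> 0}"

definition set_plus_cone :: "'z::real_vector set \<Rightarrow> 'z set \<Rightarrow> 'z set" where
  "set_plus_cone A C = {a + c | a c. a \<in> A \<and> c \<in> C}"

definition GG :: "'z::{real_vector,topological_space} set \<Rightarrow> 'z set set" where
  "GG C = {A. A = closure (convex hull (set_plus_cone A C))}"

definition set_minus_inf :: "'z::real_vector set \<Rightarrow> 'z set \<Rightarrow> 'z set" where
  "set_minus_inf A B = {z. \<forall>b\<in>B. b + z \<in> A}"

definition dom_sv :: "('x \<Rightarrow> 'z set) \<Rightarrow> 'x set" where
  "dom_sv f = {x. f x \<noteq> {}}"

definition inf_add :: "ereal \<Rightarrow> ereal \<Rightarrow> ereal" where
  "inf_add r s = (if r = \<infinity> \<or> s = \<infinity> then \<infinity> else r + s)"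

text \<open>r \<ominus> s = inf {t \<in> \<real>. r \<le> s +. t}, with inf of empty set = +\<infinity>.\<close>
definition ereal_inf_diff :: "ereal \<Rightarrow> ereal \<Rightarrow> ereal" where
  "ereal_inf_diff r s = Inf {ereal t | t. r \<le> inf_add s (ereal t)}"

text \<open>Scalarization \<phi>_{f,z*}(x) = inf {-z*(z). z \<in> f x}, = +\<infinity> if f x empty.\<close>
definition scal :: "('x \<Rightarrow> 'z set) \<Rightarrow> ('z \<Rightarrow> real) \<Rightarrow> 'x \<Rightarrow> ereal" where
  "scal f zs x = Inf {ereal (- zs z) | z. z \<in> f x}"

end

theory Submission
  imports Defs
begin

text \<open>
  Condition (e) only restates (a): \<open>0 \<in> f x \<ominus> f x\<^sub>0\<close> means \<open>f x\<^sub>0 \<subseteq> f x\<close>. Since \<open>f x\<^sub>0 \<noteq> {}\<close>,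
  every scalarization is \<open>< +\<infinity>\<close> at \<open>x\<^sub>0\<close>, and for such values the inf-differences in (c) and (d)
  have the required sign exactly when \<open>\<phi>(x\<^sub>0) < \<phi>(x)\<close>; so (b), (c) and (d) coincide.
  If \<open>f x\<^sub>0 \<subseteq> f x\<close> then \<open>\<phi>(x) \<le> \<phi>(x\<^sub>0)\<close> for every \<open>z\<^sup>*\<close>, which gives (b) \<open>\<Rightarrow>\<close> (a).
  Conversely, if \<open>z\<^sub>0 \<in> f x\<^sub>0 - f x\<close>, then, \<open>f x\<close> being the closed convex hull of \<open>f x + C\<close>,
  a continuous linear functional strictly separates \<open>z\<^sub>0\<close> from \<open>f x + C\<close>; being bounded above
  on \<open>f x + C\<close> it is nonpositive on the cone \<open>C\<close>, hence lies in \<open>C\<^sup>- - {0}\<close>, and it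
  separates the scalarizations at \<open>x\<^sub>0\<close> and \<open>x\<close>.
  The separation theorem in a locally convex space is obtained from the algebraic Hahn--Banach
  theorem, applied to the Minkowski functional of an open convex neighbourhood of \<open>0\<close>.
\<close>

section \<open>Hahn--Banach\<close>

definition sublinear :: "('a::real_vector \<Rightarrow> real) \<Rightarrow> bool" where
  "sublinear p \<longleftrightarrow> (\<forall>x y. p (x + y) \<le> p x + p y) \<and> (\<forall>c x. 0 < c \<longrightarrow> p (c *\<^sub>R x) = c * p x)"

text \<open>Partial linear functionals dominated by \<open>p\<close> are handled through their graphs, so that
  Zorn's lemma applies to them with inclusion as the order.\<close>

definition dominated_linear_graph :: "('a::real_vector \<Rightarrow> real) \<Rightarrow> ('a \<times> real) set \<Rightarrow> bool" where
  "dominated_linear_graph p G \<longleftrightarrow> (0, 0) \<in> G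
     \<and> (\<forall>x r y s. (x, r) \<in> G \<longrightarrow> (y, s) \<in> G \<longrightarrow> (x + y, r + s) \<in> G)
     \<and> (\<forall>a x r. (x, r) \<in> G \<longrightarrow> (a *\<^sub>R x, a * r) \<in> G)
     \<and> (\<forall>x r r'. (x, r) \<in> G \<longrightarrow> (x, r') \<in> G \<longrightarrow> r = r')
     \<and> (\<forall>x r. (x, r) \<in> G \<longrightarrow> r \<le> p x)"

lemma dominated_linear_graphD:
  assumes "dominated_linear_graph p G"
  shows "(0, 0) \<in> G"
    and "(x, r) \<in> G \<Longrightarrow> (y, s) \<in> G \<Longrightarrow> (x + y, r + s) \<in> G"
    and "(x, r) \<in> G \<Longrightarrow> (a *\<^sub>R x, a * r) \<in> G"
    and "(x, r) \<in> G \<Longrightarrow> (x, r') \<in> G \<Longrightarrow> r = r'"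
    and "(x, r) \<in> G \<Longrightarrow> r \<le> p x"
  using assms unfolding dominated_linear_graph_def by blast+

lemma dominated_linear_graph_Union_chain:
  assumes "Cs \<noteq> {}" and "\<forall>G\<in>Cs. dominated_linear_graph p G"
    and chain: "\<forall>G\<in>Cs. \<forall>H\<in>Cs. G \<subseteq> H \<or> H \<subseteq> G"
  shows "dominated_linear_graph p (\<Union>Cs)"
proof -
  have common: "\<exists>K\<in>Cs. a \<in> K \<and> b \<in> K" if "a \<in> \<Union>Cs" "b \<in> \<Union>Cs" for a b
    using that chain by blast
  note D = dominated_linear_graphD[OF assms(2)[rule_format]]
  show ?thesis unfolding dominated_linear_graph_def
  proof (intro conjI allI impI)
    show "(0, 0) \<in> \<Union>Cs" using assms(1) D(1) by blast
  next
    fix x r y s assume "(x, r) \<in> \<Union>Cs" "(y, s) \<in> \<Union>Cs"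
    with common obtain K where "K \<in> Cs" "(x, r) \<in> K" "(y, s) \<in> K" by blast
    then show "(x + y, r + s) \<in> \<Union>Cs" using D(2) by blast
  next
    fix a x r assume "(x, r) \<in> \<Union>Cs"
    then show "(a *\<^sub>R x, a * r) \<in> \<Union>Cs" using D(3) by blast
  next
    fix x r r' assume "(x, r) \<in> \<Union>Cs" "(x, r') \<in> \<Union>Cs"
    with common obtain K where "K \<in> Cs" "(x, r) \<in> K" "(x, r') \<in> K" by blast
    then show "r = r'" using D(4) by blast
  next
    fix x r assume "(x, r) \<in> \<Union>Cs"
    then show "r \<le> p x" using D(5) by blast
  qed
qed

lemma dominated_linear_graph_extend_constant:
  assumes "sublinear p" and G: "dominated_linear_graph p G"
  obtains c where "\<And>x r. (x, r) \<in> G \<Longrightarrow> r - p (x - v) \<le> c"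
    and "\<And>y s. (y, s) \<in> G \<Longrightarrow> c \<le> p (y + v) - s"
proof -
  let ?S = "{r - p (x - v) | x r. (x, r) \<in> G}"
  have bound: "r - p (x - v) \<le> p (y + v) - s" if "(x, r) \<in> G" "(y, s) \<in> G" for x r y s
  proof -
    have "r + s \<le> p (x + y)"
      using dominated_linear_graphD(2,5)[OF G] that by blast
    also have "\<dots> = p ((x - v) + (y + v))" by simp
    also have "\<dots> \<le> p (x - v) + p (y + v)"
      using \<open>sublinear p\<close> unfolding sublinear_def by blast
    finally show ?thesis by simp
  qed
  have ne: "?S \<noteq> {}" using dominated_linear_graphD(1)[OF G] by blast
  have bdd: "bdd_above ?S"
    unfolding bdd_above_def using bound[OF _ dominated_linear_graphD(1)[OF G]] by fastforce
  show ?thesis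
  proof (rule that)
    show "r - p (x - v) \<le> Sup ?S" if "(x, r) \<in> G" for x r
      using that by (intro cSup_upper[OF _ bdd]) blast
    show "Sup ?S \<le> p (y + v) - s" if "(y, s) \<in> G" for y s
      using that bound by (intro cSup_least[OF ne]) blast
  qed
qed

lemma dominated_linear_graph_extension_bound:
  assumes p: "sublinear p" and G: "dominated_linear_graph p G" and xr: "(x, r) \<in> G"
    and c1: "\<And>x r. (x, r) \<in> G \<Longrightarrow> r - p (x - v) \<le> c"
    and c2: "\<And>y s. (y, s) \<in> G \<Longrightarrow> c \<le> p (y + v) - s"
  shows "r + t * c \<le> p (x + t *\<^sub>R v)"
proof -
  have phom: "p (a *\<^sub>R y) = a * p y" if "0 < a" for a y
    using p that unfolding sublinear_def by blast
  show ?thesis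
  proof (cases t "0::real" rule: linorder_cases)
    case less
    define u where "u = - t"
    have u: "0 < u" using less u_def by simp
    have "r / u - p ((1 / u) *\<^sub>R x - v) \<le> c"
      using c1[OF dominated_linear_graphD(3)[OF G xr, of "1 / u"]] by simp
    then have "r - u * c \<le> u * p ((1 / u) *\<^sub>R x - v)"
      using u by (simp add: field_simps)
    also have "\<dots> = p (u *\<^sub>R ((1 / u) *\<^sub>R x - v))" using phom[OF u] by simp
    also have "u *\<^sub>R ((1 / u) *\<^sub>R x - v) = x + t *\<^sub>R v"
      using u by (simp add: u_def algebra_simps)
    finally show ?thesis by (simp add: u_def)
  next
    case equal
    then show ?thesis using dominated_linear_graphD(5)[OF G xr] by simp
  next
    case greater
    have "c \<le> p ((1 / t) *\<^sub>R x + v) - r / t"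
      using c2[OF dominated_linear_graphD(3)[OF G xr, of "1 / t"]] by simp
    then have "r + t * c \<le> t * p ((1 / t) *\<^sub>R x + v)"
      using greater by (simp add: field_simps)
    also have "\<dots> = p (t *\<^sub>R ((1 / t) *\<^sub>R x + v))" using phom[OF greater] by simp
    also have "t *\<^sub>R ((1 / t) *\<^sub>R x + v) = x + t *\<^sub>R v"
      using greater by (simp add: algebra_simps)
    finally show ?thesis .
  qed
qed

lemma dominated_linear_graph_direction_unique:
  assumes G: "dominated_linear_graph p G" and v: "v \<notin> fst ` G"
    and "(x1, r1) \<in> G" "(x2, r2) \<in> G" and eq: "x1 + t1 *\<^sub>R v = x2 + t2 *\<^sub>R v"
  shows "t1 = t2"
proof (rule ccontr)
  assume ne: "t1 \<noteq> t2"
  note Gscale = dominated_linear_graphD(3)[OF G]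
  have "(x2 + (-1) *\<^sub>R x1, r2 + (-1) * r1) \<in> G"
    using dominated_linear_graphD(2)[OF G assms(4) Gscale[OF assms(3)]] .
  moreover have "x2 + (-1) *\<^sub>R x1 = (t1 - t2) *\<^sub>R v"
    using eq by (simp add: algebra_simps)
  ultimately have "((t1 - t2) *\<^sub>R v, r2 - r1) \<in> G" by simp
  from Gscale[OF this, of "1 / (t1 - t2)"] have "(v, (r2 - r1) / (t1 - t2)) \<in> G"
    using ne by simp
  then show False using v by force
qed

lemma dominated_linear_graph_extension:
  assumes p: "sublinear p" and G: "dominated_linear_graph p G" and v: "v \<notin> fst ` G"
    and c1: "\<And>x r. (x, r) \<in> G \<Longrightarrow> r - p (x - v) \<le> c"
    and c2: "\<And>y s. (y, s) \<in> G \<Longrightarrow> c \<le> p (y + v) - s"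
  shows "dominated_linear_graph p {(x + t *\<^sub>R v, r + t * c) | x r t. (x, r) \<in> G}"
proof -
  note G0 = dominated_linear_graphD(1)[OF G] and Gadd = dominated_linear_graphD(2)[OF G]
    and Gscale = dominated_linear_graphD(3)[OF G] and Gfun = dominated_linear_graphD(4)[OF G]
  define G' where "G' = {(x + t *\<^sub>R v, r + t * c) | x r t. (x, r) \<in> G}"
  have "dominated_linear_graph p G'" unfolding dominated_linear_graph_def
  proof (intro conjI allI impI)
    show "(0, 0) \<in> G'" unfolding G'_def
      using G0 by (intro CollectI exI[of _ 0] exI[of _ 0] exI[of _ 0]) simp
  next
    fix x r y s assume "(x, r) \<in> G'" "(y, s) \<in> G'"
    then obtain x1 r1 t1 x2 r2 t2 where "(x1, r1) \<in> G" "(x2, r2) \<in> G"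
      and "x = x1 + t1 *\<^sub>R v" "r = r1 + t1 * c" "y = x2 + t2 *\<^sub>R v" "s = r2 + t2 * c"
      unfolding G'_def by blast
    then show "(x + y, r + s) \<in> G'" unfolding G'_def
      by (intro CollectI exI[of _ "x1 + x2"] exI[of _ "r1 + r2"] exI[of _ "t1 + t2"])
        (simp add: Gadd algebra_simps)
  next
    fix a x r assume "(x, r) \<in> G'"
    then obtain x1 r1 t1 where "(x1, r1) \<in> G" "x = x1 + t1 *\<^sub>R v" "r = r1 + t1 * c"
      unfolding G'_def by blast
    then show "(a *\<^sub>R x, a * r) \<in> G'" unfolding G'_def
      by (intro CollectI exI[of _ "a *\<^sub>R x1"] exI[of _ "a * r1"] exI[of _ "a * t1"])
        (simp add: Gscale algebra_simps)
  next
    fix x r r' assume "(x, r) \<in> G'" "(x, r') \<in> G'"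
    then obtain x1 r1 t1 x2 r2 t2 where "(x1, r1) \<in> G" "(x2, r2) \<in> G"
      and "x = x1 + t1 *\<^sub>R v" "r = r1 + t1 * c" "x = x2 + t2 *\<^sub>R v" "r' = r2 + t2 * c"
      unfolding G'_def by blast
    moreover from this have "t1 = t2" using dominated_linear_graph_direction_unique[OF G v] by blast
    ultimately have "x1 = x2" "(x1, r2) \<in> G" by simp_all
    then have "r1 = r2" using Gfun \<open>(x1, r1) \<in> G\<close> by blast
    then show "r = r'" using \<open>t1 = t2\<close> \<open>r = r1 + t1 * c\<close> \<open>r' = r2 + t2 * c\<close> by simp
  next
    fix x r assume "(x, r) \<in> G'"
    then show "r \<le> p x" unfolding G'_def
      using dominated_linear_graph_extension_bound[OF p G _ c1 c2] by blast
  qed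
  then show ?thesis by (simp add: G'_def)
qed

lemma dominated_linear_graph_extend:
  assumes p: "sublinear p" and G: "dominated_linear_graph p G" and v: "v \<notin> fst ` G"
  shows "\<exists>G'. dominated_linear_graph p G' \<and> G \<subset> G'"
proof -
  obtain c where c1: "\<And>x r. (x, r) \<in> G \<Longrightarrow> r - p (x - v) \<le> c"
    and c2: "\<And>y s. (y, s) \<in> G \<Longrightarrow> c \<le> p (y + v) - s"
    using dominated_linear_graph_extend_constant[OF p G, where v = v] by blast
  define G' where "G' = {(x + t *\<^sub>R v, r + t * c) | x r t. (x, r) \<in> G}"
  have "dominated_linear_graph p G'"
    unfolding G'_def by (rule dominated_linear_graph_extension[OF p G v c1 c2])
  moreover have "G \<subseteq> G'"
  proof
    fix q assume "q \<in> G"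
    then show "q \<in> G'" unfolding G'_def
      by (intro CollectI exI[of _ "fst q"] exI[of _ "snd q"] exI[of _ 0]) simp
  qed
  moreover have "(v, c) \<in> G'" unfolding G'_def
    using dominated_linear_graphD(1)[OF G] by (intro CollectI exI[of _ 0] exI[of _ 0] exI[of _ 1]) simp
  moreover have "(v, c) \<notin> G" using v by (metis fst_conv image_eqI)
  ultimately show ?thesis by blast
qed

lemma dominated_linear_graph_maximal_total:
  assumes p: "sublinear p" and G0: "dominated_linear_graph p G0"
  obtains M where "dominated_linear_graph p M" "G0 \<subseteq> M" "\<And>x. x \<in> fst ` M"
proof -
  let ?A = "{G. dominated_linear_graph p G \<and> G0 \<subseteq> G}"
  have "\<exists>M\<in>?A. \<forall>X\<in>?A. M \<subseteq> X \<longrightarrow> X = M"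
  proof (rule subset_Zorn_nonempty)
    fix Cs assume ne: "Cs \<noteq> {}" and "subset.chain ?A Cs"
    then have sub: "Cs \<subseteq> ?A" and chain: "\<forall>X\<in>Cs. \<forall>Y\<in>Cs. X \<subseteq> Y \<or> Y \<subseteq> X"
      unfolding subset_chain_def by auto
    have "\<forall>G\<in>Cs. dominated_linear_graph p G" using sub by blast
    from dominated_linear_graph_Union_chain[OF ne this chain]
    have "dominated_linear_graph p (\<Union>Cs)" .
    moreover have "G0 \<subseteq> \<Union>Cs" using ne sub by blast
    ultimately show "\<Union>Cs \<in> ?A" by simp
  qed (use G0 in blast)
  then obtain M where "M \<in> ?A" and maximal_A: "\<forall>X\<in>?A. M \<subseteq> X \<longrightarrow> X = M" ..
  then have M: "dominated_linear_graph p M" "G0 \<subseteq> M" by auto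
  have maximal: "X = M" if "dominated_linear_graph p X" "M \<subseteq> X" for X
    using maximal_A that M(2) by blast
  have total: "x \<in> fst ` M" for x
  proof (rule ccontr)
    assume "x \<notin> fst ` M"
    then obtain G' where "dominated_linear_graph p G'" "M \<subset> G'"
      using dominated_linear_graph_extend[OF p M(1)] by blast
    then show False using maximal[of G'] by blast
  qed
  show ?thesis by (rule that[OF M total])
qed

theorem hahn_banach:
  assumes p: "sublinear p" and G0: "dominated_linear_graph p G0"
  obtains g where "linear g" "\<And>x. g x \<le> p x" "\<And>x r. (x, r) \<in> G0 \<Longrightarrow> g x = r"
proof -
  obtain M where M: "dominated_linear_graph p M" "G0 \<subseteq> M" and total: "\<And>x. x \<in> fst ` M"
    using dominated_linear_graph_maximal_total[OF p G0] by blast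
  define g where "g x = (THE r. (x, r) \<in> M)" for x
  have gM: "(x, g x) \<in> M" for x
  proof -
    obtain r where "(x, r) \<in> M" using total[of x] by force
    then have "\<exists>!r. (x, r) \<in> M" using dominated_linear_graphD(4)[OF M(1)] by blast
    then show ?thesis unfolding g_def by (rule theI')
  qed
  have g_eq: "g x = r" if "(x, r) \<in> M" for x r
    using dominated_linear_graphD(4)[OF M(1) gM that] .
  show ?thesis
  proof
    show "linear g"
    proof (rule linearI)
      show "g (x + y) = g x + g y" for x y
        using g_eq[OF dominated_linear_graphD(2)[OF M(1) gM gM]] .
      show "g (a *\<^sub>R x) = a *\<^sub>R g x" for a x
        using g_eq[OF dominated_linear_graphD(3)[OF M(1) gM]] by simp
    qed
    show "g x \<le> p x" for x using dominated_linear_graphD(5)[OF M(1) gM] .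
    show "g x = r" if "(x, r) \<in> G0" for x r using g_eq that M(2) by blast
  qed
qed

section \<open>Minkowski functionals and separation\<close>

lemma locally_convex_tvs_continuous_on:
  assumes "locally_convex_tvs TYPE('z::{real_vector,t2_space})"
  shows continuous_on_translation: "continuous_on UNIV (\<lambda>y::'z. y + a)"
    and continuous_on_scaling: "continuous_on UNIV (\<lambda>y::'z. c *\<^sub>R y)"
    and continuous_on_ray: "continuous_on UNIV (\<lambda>s::real. s *\<^sub>R (z::'z))"
proof -
  have add: "continuous_on UNIV (\<lambda>p::'z \<times> 'z. fst p + snd p)"
    and scale: "continuous_on UNIV (\<lambda>p::real \<times> 'z. fst p *\<^sub>R snd p)"
    using assms unfolding locally_convex_tvs_def by blast+
  show "continuous_on UNIV (\<lambda>y::'z. y + a)"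
    using continuous_on_compose2[OF add continuous_on_Pair[OF continuous_on_id continuous_on_const]]
    by simp
  show "continuous_on UNIV (\<lambda>y::'z. c *\<^sub>R y)"
    using continuous_on_compose2[OF scale continuous_on_Pair[OF continuous_on_const continuous_on_id]]
    by simp
  show "continuous_on UNIV (\<lambda>s::real. s *\<^sub>R z)"
    using continuous_on_compose2[OF scale continuous_on_Pair[OF continuous_on_id continuous_on_const]]
    by simp
qed

lemma locally_convex_tvs_ray_open:
  assumes "locally_convex_tvs TYPE('z::{real_vector,t2_space})" and "open Q" and "s0 *\<^sub>R (z::'z) \<in> Q"
  obtains e where "e > 0" "\<And>s. \<bar>s - s0\<bar> < e \<Longrightarrow> s *\<^sub>R z \<in> Q"
proof -
  have "open ((\<lambda>s::real. s *\<^sub>R z) -` Q)"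
    using open_vimage[OF \<open>open Q\<close> continuous_on_ray[OF assms(1)]] .
  then obtain e where "e > 0" "ball s0 e \<subseteq> (\<lambda>s::real. s *\<^sub>R z) -` Q"
    using assms(3) open_contains_ball by blast
  then show ?thesis using that by (auto simp: dist_real_def abs_minus_commute subset_eq)
qed

lemma convex_scaleR_mem:
  assumes "convex Q" "0 \<in> Q" "z \<in> Q" "0 \<le> u" "u \<le> 1"
  shows "u *\<^sub>R z \<in> Q"
  using convexD[OF assms(1) assms(3) assms(2), of u "1 - u"] assms by simp

definition minkowski_functional :: "'z::real_vector set \<Rightarrow> 'z \<Rightarrow> real" where
  "minkowski_functional Q z = Inf {t. 0 < t \<and> (1 / t) *\<^sub>R z \<in> Q}"

locale open_convex_nbhd_0 =
  fixes Q :: "'z::{real_vector,t2_space} set"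
  assumes lctvs: "locally_convex_tvs TYPE('z)"
    and open_Q: "open Q" and convex_Q: "convex Q" and zero_in_Q: "0 \<in> Q"
begin

definition scalings :: "'z \<Rightarrow> real set" where
  "scalings z = {t. 0 < t \<and> (1 / t) *\<^sub>R z \<in> Q}"

lemma minkowski_functional_scalings: "minkowski_functional Q z = Inf (scalings z)"
  unfolding minkowski_functional_def scalings_def ..

lemma scalings_nonempty: "scalings z \<noteq> {}"
proof -
  obtain e where "e > 0" "\<And>s. \<bar>s - 0\<bar> < e \<Longrightarrow> s *\<^sub>R z \<in> Q"
    using locally_convex_tvs_ray_open[OF lctvs open_Q, of 0] zero_in_Q by auto
  then have "2 / e \<in> scalings z" unfolding scalings_def by simp
  then show ?thesis by blast
qed

lemma scalings_bdd_below: "bdd_below (scalings z)"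
  unfolding scalings_def bdd_below_def by (rule exI[of _ 0]) auto

lemma minkowski_functional_le:
  "t \<in> scalings z \<Longrightarrow> minkowski_functional Q z \<le> t"
  unfolding minkowski_functional_scalings by (rule cInf_lower[OF _ scalings_bdd_below])

lemma minkowski_functional_ge:
  "(\<And>t. t \<in> scalings z \<Longrightarrow> b \<le> t) \<Longrightarrow> b \<le> minkowski_functional Q z"
  unfolding minkowski_functional_scalings by (rule cInf_greatest[OF scalings_nonempty])

lemma minkowski_functional_nonneg: "0 \<le> minkowski_functional Q z"
  by (rule minkowski_functional_ge) (simp add: scalings_def)

lemma minkowski_functional_less_1:
  assumes "z \<in> Q" shows "minkowski_functional Q z < 1"
proof -
  obtain e where "e > 0" "\<And>s. \<bar>s - 1\<bar> < e \<Longrightarrow> s *\<^sub>R z \<in> Q"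
    using locally_convex_tvs_ray_open[OF lctvs open_Q, of 1] assms by auto
  then have s: "1 + e / 2 > 1" "(1 + e / 2) *\<^sub>R z \<in> Q" by auto
  then have "1 / (1 + e / 2) \<in> scalings z" unfolding scalings_def by simp
  then have "minkowski_functional Q z \<le> 1 / (1 + e / 2)" by (rule minkowski_functional_le)
  also have "\<dots> < 1" using s(1) by simp
  finally show ?thesis .
qed

lemma minkowski_functional_ge_1:
  assumes "z \<notin> Q" shows "1 \<le> minkowski_functional Q z"
proof (rule minkowski_functional_ge, rule ccontr)
  fix t assume "t \<in> scalings z" and "\<not> 1 \<le> t"
  then have t: "0 < t" "t < 1" "(1 / t) *\<^sub>R z \<in> Q" by (auto simp: scalings_def)
  then show False
    using convex_scaleR_mem[OF convex_Q zero_in_Q t(3), of t] assms by simp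
qed

lemma minkowski_functional_scaleR:
  assumes c: "0 < c" shows "minkowski_functional Q (c *\<^sub>R z) = c * minkowski_functional Q z"
proof (rule antisym)
  have "minkowski_functional Q (c *\<^sub>R z) / c \<le> minkowski_functional Q z"
  proof (rule minkowski_functional_ge)
    fix t assume "t \<in> scalings z"
    then have "c * t \<in> scalings (c *\<^sub>R z)" unfolding scalings_def using c by auto
    then have "minkowski_functional Q (c *\<^sub>R z) \<le> c * t" by (rule minkowski_functional_le)
    then show "minkowski_functional Q (c *\<^sub>R z) / c \<le> t" using c by (simp add: field_simps)
  qed
  then show "minkowski_functional Q (c *\<^sub>R z) \<le> c * minkowski_functional Q z"
    using c by (simp add: field_simps)
next
  have "minkowski_functional Q z * c \<le> minkowski_functional Q (c *\<^sub>R z)"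
  proof (rule minkowski_functional_ge)
    fix t assume "t \<in> scalings (c *\<^sub>R z)"
    then have "t / c \<in> scalings z" unfolding scalings_def using c by auto
    then have "minkowski_functional Q z \<le> t / c" by (rule minkowski_functional_le)
    then show "minkowski_functional Q z * c \<le> t" using c by (simp add: field_simps)
  qed
  then show "c * minkowski_functional Q z \<le> minkowski_functional Q (c *\<^sub>R z)"
    by (simp add: mult.commute)
qed

lemma minkowski_functional_add:
  "minkowski_functional Q (x + y) \<le> minkowski_functional Q x + minkowski_functional Q y"
proof -
  have sum: "minkowski_functional Q (x + y) \<le> s + t" if s: "s \<in> scalings x" and t: "t \<in> scalings y" for s t
  proof -
    have s0: "0 < s" "(1 / s) *\<^sub>R x \<in> Q" and t0: "0 < t" "(1 / t) *\<^sub>R y \<in> Q"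
      using s t unfolding scalings_def by auto
    have "(s / (s + t)) *\<^sub>R ((1 / s) *\<^sub>R x) + (t / (s + t)) *\<^sub>R ((1 / t) *\<^sub>R y) \<in> Q"
      by (rule convexD[OF convex_Q s0(2) t0(2)]) (use s0 t0 in \<open>auto simp flip: add_divide_distrib\<close>)
    moreover have "(s / (s + t)) *\<^sub>R ((1 / s) *\<^sub>R x) + (t / (s + t)) *\<^sub>R ((1 / t) *\<^sub>R y)
        = (1 / (s + t)) *\<^sub>R (x + y)"
      using s0 t0 by (simp add: scaleR_right_distrib)
    ultimately have "s + t \<in> scalings (x + y)" unfolding scalings_def using s0 t0 by auto
    then show ?thesis by (rule minkowski_functional_le)
  qed
  have "minkowski_functional Q (x + y) - t \<le> minkowski_functional Q x" if "t \<in> scalings y" for t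
    by (rule minkowski_functional_ge) (use sum that in force)
  then have "minkowski_functional Q (x + y) - minkowski_functional Q x \<le> minkowski_functional Q y"
    by (intro minkowski_functional_ge) force
  then show ?thesis by simp
qed

lemma sublinear_minkowski_functional: "sublinear (minkowski_functional Q)"
  unfolding sublinear_def using minkowski_functional_add minkowski_functional_scaleR by blast

end

lemma linear_continuous_if_bounded_on_nbhd:
  fixes g :: "'z::{real_vector,t2_space} \<Rightarrow> real"
  assumes Z: "locally_convex_tvs TYPE('z)" and g: "linear g"
    and N: "open N" "0 \<in> N" and bounded: "\<And>y. y \<in> N \<Longrightarrow> g y < 1"
  shows "continuous_on UNIV g"
  unfolding continuous_on_topological
proof (intro ballI allI impI)
  fix x :: 'z and B :: "real set" assume "open B" "g x \<in> B"
  then obtain e where e: "e > 0" "ball (g x) e \<subseteq> B" using open_contains_ball by blast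
  have open_affine: "open ((\<lambda>y. c *\<^sub>R (y + a)) -` N)" for c a
    using open_vimage[OF N(1) continuous_on_compose2[OF continuous_on_scaling[OF Z]
          continuous_on_translation[OF Z] subset_UNIV]] .
  define A where "A = (\<lambda>y. (1 / e) *\<^sub>R (y + - x)) -` N \<inter> (\<lambda>y. (- 1 / e) *\<^sub>R (y + - x)) -` N"
  have "open A" unfolding A_def by (intro open_Int open_affine)
  moreover have "x \<in> A" unfolding A_def using N(2) by simp
  moreover have "g y \<in> B" if "y \<in> A" for y
  proof -
    have g_affine: "g (c *\<^sub>R (y + - x)) = c * (g y - g x)" for c
      using linear_scale[OF g] linear_add[OF g] linear_neg[OF g] linear_diff[OF g] by simp
    have "(1 / e) * (g y - g x) < 1" "(- 1 / e) * (g y - g x) < 1"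
      using bounded that unfolding A_def g_affine[symmetric] by auto
    then have "g y - g x < e" "g x - g y < e"
      using e(1) by (simp_all add: field_simps)
    then have "\<bar>g y - g x\<bar> < e" by linarith
    then show ?thesis using e(2) by (auto simp: dist_real_def abs_minus_commute)
  qed
  ultimately show "\<exists>A. open A \<and> x \<in> A \<and> (\<forall>y\<in>UNIV. y \<in> A \<longrightarrow> g y \<in> B)" by blast
qed

lemma (in open_convex_nbhd_0) separating_functional:
  assumes y0: "y0 \<notin> Q"
  obtains g :: "'z \<Rightarrow> real" where "linear g" "continuous_on UNIV g" "g y0 = 1" "\<And>y. y \<in> Q \<Longrightarrow> g y < 1"
proof -
  let ?p = "minkowski_functional Q"
  have "y0 \<noteq> 0" using y0 zero_in_Q by blast
  define L where "L = range (\<lambda>t. (t *\<^sub>R y0, t))"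
  have L_iff: "(x, r) \<in> L \<longleftrightarrow> x = r *\<^sub>R y0" for x r unfolding L_def by auto
  have "dominated_linear_graph ?p L"
    unfolding dominated_linear_graph_def L_iff
  proof (intro conjI allI impI)
    fix x r assume x: "x = r *\<^sub>R y0"
    show "r \<le> ?p x"
    proof (cases "r > 0")
      case True
      then show ?thesis
        using minkowski_functional_ge_1[OF y0] by (simp add: x minkowski_functional_scaleR)
    qed (use minkowski_functional_nonneg[of x] in simp)
  qed (use \<open>y0 \<noteq> 0\<close> in \<open>simp_all add: scaleR_add_left\<close>)
  then obtain g where g: "linear g" "\<And>x. g x \<le> ?p x"
    and g_line: "\<And>x r. (x, r) \<in> L \<Longrightarrow> g x = r"
    using hahn_banach[OF sublinear_minkowski_functional] by blast
  have g_Q: "g y < 1" if "y \<in> Q" for y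
    using g(2)[of y] minkowski_functional_less_1[OF that] by simp
  have "continuous_on UNIV g"
    by (rule linear_continuous_if_bounded_on_nbhd[OF lctvs g(1) open_Q zero_in_Q g_Q])
  moreover have "g y0 = 1" using g_line[of y0 1] L_iff by simp
  ultimately show ?thesis using that g(1) g_Q by blast
qed

lemma locally_convex_tvs_symmetric_nbhd:
  assumes Z: "locally_convex_tvs TYPE('z::{real_vector,t2_space})" and "open U" "0 \<in> (U::'z set)"
  obtains W where "open W" "convex W" "0 \<in> W" "\<And>w. w \<in> W \<Longrightarrow> - w \<in> U"
proof -
  obtain V where V: "open V" "convex V" "0 \<in> V" "V \<subseteq> U"
    using Z assms(2,3) unfolding locally_convex_tvs_def by meson
  define W where "W = V \<inter> (\<lambda>y. (- 1) *\<^sub>R y) -` V"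
  have "open W" "convex W" "0 \<in> W"
    unfolding W_def using V(1-3) open_vimage[OF V(1) continuous_on_scaling[OF Z]]
    by (auto intro!: convex_Int convex_linear_vimage linear_scale_self)
  moreover have "- w \<in> U" if "w \<in> W" for w using that V(4) by (auto simp: W_def)
  ultimately show ?thesis using that by blast
qed

lemma open_convex_nbhd_0_translate_plus:
  fixes K :: "'z::{real_vector,t2_space} set"
  assumes Z: "locally_convex_tvs TYPE('z)" and K: "convex K" "x1 \<in> K"
    and W: "open W" "convex W" "0 \<in> W"
  shows "open_convex_nbhd_0 {y. \<exists>a\<in>K. y + (x1 - a) \<in> W}"
proof
  let ?Q = "{y. \<exists>a\<in>K. y + (x1 - a) \<in> W}"
  have "?Q = (\<Union>a\<in>K. (\<lambda>y. y + (x1 - a)) -` W)" by blast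
  then show "open ?Q" using open_vimage[OF W(1) continuous_on_translation[OF Z]] by auto
  have Q_sum: "?Q = (\<Union>x \<in> (+) (- x1) ` K. \<Union>w \<in> W. {x + w})"
  proof (intro set_eqI iffI)
    fix y assume "y \<in> ?Q"
    then obtain a where "a \<in> K" "y + (x1 - a) \<in> W" by blast
    moreover have "y = (- x1 + a) + (y + (x1 - a))" by (simp add: algebra_simps)
    ultimately show "y \<in> (\<Union>x \<in> (+) (- x1) ` K. \<Union>w \<in> W. {x + w})" by blast
  next
    fix y assume "y \<in> (\<Union>x \<in> (+) (- x1) ` K. \<Union>w \<in> W. {x + w})"
    then obtain a w where "a \<in> K" "w \<in> W" "y = (- x1 + a) + w" by blast
    then show "y \<in> ?Q" by (intro CollectI bexI[of _ a]) simp_all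
  qed
  show "convex ?Q" unfolding Q_sum by (rule convex_sums[OF convex_translation[OF K(1)] W(2)])
  show "0 \<in> ?Q" using K(2) W(3) by force
qed (fact Z)

lemma separating_functional_not_in_closure:
  fixes K :: "'z::{real_vector,t2_space} set"
  assumes Z: "locally_convex_tvs TYPE('z)" and K: "convex K" and z0: "z0 \<notin> closure K"
  obtains g :: "'z \<Rightarrow> real" and s
  where "linear g" "continuous_on UNIV g" "0 < s" "\<And>a. a \<in> K \<Longrightarrow> g a + s \<le> g z0"
proof (cases "K = {}")
  case True
  then show ?thesis using that[of "\<lambda>_. 0" 1] by (simp add: linear_zero)
next
  case False
  then obtain x1 where x1: "x1 \<in> K" by blast
  have "open ((\<lambda>y. y + z0) -` (- closure K))" "0 \<in> (\<lambda>y. y + z0) -` (- closure K)"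
    using open_vimage[OF open_Compl[OF closed_closure] continuous_on_translation[OF Z]] z0 by auto
  then obtain W where W: "open W" "convex W" "0 \<in> W"
    and W_sym: "\<And>w. w \<in> W \<Longrightarrow> - w + z0 \<notin> closure K"
    using locally_convex_tvs_symmetric_nbhd[OF Z] by (metis vimageE ComplD)
  txt \<open>\<open>Q\<close> is the Minkowski sum \<open>(K - x1) + W\<close>.\<close>
  define Q where "Q = {y. \<exists>a\<in>K. y + (x1 - a) \<in> W}"
  interpret open_convex_nbhd_0 Q
    unfolding Q_def by (rule open_convex_nbhd_0_translate_plus[OF Z K x1 W])
  have "z0 - x1 \<notin> Q"
  proof
    assume "z0 - x1 \<in> Q"
    then obtain a where "a \<in> K" "z0 - a \<in> W" unfolding Q_def by auto
    then show False using W_sym[of "z0 - a"] closure_subset by auto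
  qed
  then obtain g :: "'z \<Rightarrow> real" where g: "linear g" "continuous_on UNIV g" "g (z0 - x1) = 1"
    and g_Q: "\<And>y. y \<in> Q \<Longrightarrow> g y < 1"
    using separating_functional[of "z0 - x1"] by (metis (no_types))
  obtain d where "d > 0" and d: "\<And>s. \<bar>s - 0\<bar> < d \<Longrightarrow> s *\<^sub>R (z0 - x1) \<in> W"
    using locally_convex_tvs_ray_open[OF Z W(1), of 0] W(3) by auto
  txt \<open>The points of \<open>K\<close> shifted by \<open>(d/2) (z0 - x1)\<close> still lie in \<open>x1 + Q\<close>, where \<open>g < g z0\<close>.\<close>
  have "g a + d / 2 \<le> g z0" if "a \<in> K" for a
  proof -
    have "(a + (d / 2) *\<^sub>R (z0 - x1) - x1) + (x1 - a) \<in> W"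
      using d[of "d / 2"] \<open>d > 0\<close> by (simp add: algebra_simps)
    then have "a + (d / 2) *\<^sub>R (z0 - x1) - x1 \<in> Q" unfolding Q_def using that by blast
    then have "g (a + (d / 2) *\<^sub>R (z0 - x1) - x1) < 1" by (rule g_Q)
    moreover have "g (a + (d / 2) *\<^sub>R (z0 - x1) - x1) = g a + d / 2 * g (z0 - x1) - g x1"
      by (simp only: linear_diff[OF g(1)] linear_add[OF g(1)] linear_scale[OF g(1)] real_scaleR_def)
    ultimately have "g a + d / 2 - g x1 < 1" using g(3) by simp
    moreover have "g z0 - g x1 = 1" using g(3) linear_diff[OF g(1), of z0 x1] by simp
    ultimately show ?thesis by linarith
  qed
  then show ?thesis using that[OF g(1,2), of "d / 2"] \<open>d > 0\<close> by simp
qed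

lemma linear_nonpos_on_cone:
  fixes g :: "'z::real_vector \<Rightarrow> real"
  assumes g: "linear g" and "cone C" and "a \<in> A" and bdd: "\<And>a c. a \<in> A \<Longrightarrow> c \<in> C \<Longrightarrow> g (a + c) \<le> b"
    and "c \<in> C"
  shows "g c \<le> 0"
proof (rule ccontr)
  assume "\<not> g c \<le> 0"
  define t where "t = \<bar>b - g a\<bar> / g c + 1"
  have "0 \<le> t" using \<open>\<not> g c \<le> 0\<close> by (simp add: t_def)
  then have "g (a + t *\<^sub>R c) \<le> b" using bdd[OF \<open>a \<in> A\<close>] mem_cone[OF \<open>cone C\<close> \<open>c \<in> C\<close>] by blast
  moreover have "g (a + t *\<^sub>R c) = g a + \<bar>b - g a\<bar> + g c"
    using \<open>\<not> g c \<le> 0\<close> by (simp add: linear_add[OF g] linear_scale[OF g] t_def distrib_right)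
  ultimately show False using \<open>\<not> g c \<le> 0\<close> by linarith
qed

section \<open>Inf-differences and scalarizations\<close>

lemma ereal_inf_diff_simps:
  "ereal_inf_diff (ereal b) (ereal a) = ereal (b - a)"
  "ereal_inf_diff \<infinity> (ereal a) = \<infinity>"
  "ereal_inf_diff (- \<infinity>) s = - \<infinity>"
  "ereal_inf_diff r \<infinity> = - \<infinity>"
  "r \<noteq> - \<infinity> \<Longrightarrow> ereal_inf_diff r (- \<infinity>) = \<infinity>"
proof -
  have all: "Inf {ereal t |t. P t} = - \<infinity>" if "\<And>t. P t" for P
    by (rule ereal_bot, rule Inf_lower) (use that in blast)
  have none: "Inf {ereal t |t. P t} = \<infinity>" if "\<And>t. \<not> P t" for P
    using that by (simp add: top_ereal_def)
  have "{ereal t |t. ereal b \<le> inf_add (ereal a) (ereal t)} = {ereal t |t. b - a \<le> t}"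
    unfolding inf_add_def by auto
  moreover have "Inf {ereal t |t. b - a \<le> t} = ereal (b - a)"
    by (rule antisym; (rule Inf_lower | rule Inf_greatest)) auto
  ultimately show "ereal_inf_diff (ereal b) (ereal a) = ereal (b - a)"
    unfolding ereal_inf_diff_def by simp
  show "ereal_inf_diff \<infinity> (ereal a) = \<infinity>"
    unfolding ereal_inf_diff_def inf_add_def by (rule none) simp
  show "ereal_inf_diff (- \<infinity>) s = - \<infinity>"
    unfolding ereal_inf_diff_def by (rule all) simp
  show "ereal_inf_diff r \<infinity> = - \<infinity>"
    unfolding ereal_inf_diff_def inf_add_def by (rule all) simp
  show "r \<noteq> - \<infinity> \<Longrightarrow> ereal_inf_diff r (- \<infinity>) = \<infinity>"
    unfolding ereal_inf_diff_def inf_add_def by (rule none) (cases r, auto)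
qed

lemma ereal_inf_diff_pos_iff:
  "s \<noteq> \<infinity> \<Longrightarrow> 0 < ereal_inf_diff r s \<longleftrightarrow> s < r"
  by (cases r; cases s) (simp_all add: ereal_inf_diff_simps)

lemma ereal_inf_diff_neg_iff:
  "s \<noteq> \<infinity> \<Longrightarrow> r \<noteq> - \<infinity> \<and> ereal_inf_diff s r < 0 \<longleftrightarrow> s < r"
  by (cases r; cases s) (simp_all add: ereal_inf_diff_simps)

lemma scal_le: "z \<in> f x \<Longrightarrow> scal f zs x \<le> ereal (- zs z)"
  unfolding scal_def by (rule Inf_lower) blast

lemma scal_ge: "(\<And>z. z \<in> f x \<Longrightarrow> r \<le> ereal (- zs z)) \<Longrightarrow> r \<le> scal f zs x"
  unfolding scal_def by (rule Inf_greatest) blast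

lemma scal_antimono: "f x0 \<subseteq> f x \<Longrightarrow> scal f zs x \<le> scal f zs x0"
  unfolding scal_def by (rule Inf_superset_mono) blast

lemma scal_empty: "f x = {} \<Longrightarrow> scal f zs x = \<infinity>"
  unfolding scal_def by (simp add: top_ereal_def)

lemma scal_less_infinity: "x \<in> dom_sv f \<Longrightarrow> scal f zs x < \<infinity>"
  unfolding dom_sv_def using scal_le[of _ f x zs] by (auto intro: le_less_trans)

lemma neg_polar_separation:
  fixes C :: "'z::{real_vector,t2_space} set"
  assumes Z: "locally_convex_tvs TYPE('z)" and C: "cone C" "0 \<in> C"
    and A: "A \<in> GG C" "a0 \<in> A" and z0: "z0 \<notin> A"
  obtains g s where "g \<in> neg_polar C - {\<lambda>_. 0}" "0 < s" "\<And>a c. a \<in> A \<Longrightarrow> c \<in> C \<Longrightarrow> g (a + c) + s \<le> g z0"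
proof -
  define H where "H = convex hull (set_plus_cone A C)"
  have plus_H: "a + c \<in> H" if "a \<in> A" "c \<in> C" for a c
    using that hull_subset[of "set_plus_cone A C"] unfolding H_def set_plus_cone_def by blast
  have "z0 \<notin> closure H" using A(1) z0 unfolding GG_def H_def by auto
  moreover have "convex H" unfolding H_def by (rule convex_convex_hull)
  ultimately obtain g :: "'z \<Rightarrow> real" and s where g: "linear g" "continuous_on UNIV g"
    and "0 < s" and gap: "\<And>a. a \<in> H \<Longrightarrow> g a + s \<le> g z0"
    using separating_functional_not_in_closure[OF Z] by blast
  have gap_A: "g (a + c) \<le> g z0 - s" if "a \<in> A" "c \<in> C" for a c
    using gap[OF plus_H[OF that]] by simp
  have "g \<in> neg_polar C"
    unfolding neg_polar_def top_dual_def using g linear_nonpos_on_cone[OF g(1) C(1) A(2) gap_A] by blast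
  moreover have "g \<noteq> (\<lambda>_. 0)"
  proof
    assume "g = (\<lambda>_. 0)"
    then show False using gap_A[OF A(2) C(2)] \<open>0 < s\<close> by simp
  qed
  ultimately show ?thesis using that \<open>0 < s\<close> gap_A by force
qed

lemma scal_less_if_not_subset:
  fixes C :: "'z::{real_vector,t2_space} set" and f :: "'x \<Rightarrow> 'z set"
  assumes Z: "locally_convex_tvs TYPE('z)" and C: "cone C" "0 \<in> C"
    and polar_ne: "neg_polar C - {\<lambda>_. 0} \<noteq> {}" and fx: "f x \<in> GG C"
    and z0: "z0 \<in> f x0" "z0 \<notin> f x"
  shows "\<exists>zs \<in> neg_polar C - {\<lambda>_. 0}. scal f zs x0 < scal f zs x"
proof (cases "f x = {}")
  case True
  obtain zs where "zs \<in> neg_polar C - {\<lambda>_. 0}" using polar_ne by blast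
  moreover have "scal f zs x0 < scal f zs x"
  proof -
    have "scal f zs x0 \<le> ereal (- zs z0)" by (rule scal_le[where f = f and x = x0, OF z0(1)])
    also have "\<dots> < \<infinity>" by simp
    also have "\<dots> = scal f zs x" using scal_empty[where f = f and x = x, OF True] by simp
    finally show ?thesis .
  qed
  ultimately show ?thesis by blast
next
  case False
  then obtain a0 where "a0 \<in> f x" by blast
  then obtain g s where g: "g \<in> neg_polar C - {\<lambda>_. 0}" and "0 < s"
    and gap: "\<And>a c. a \<in> f x \<Longrightarrow> c \<in> C \<Longrightarrow> g (a + c) + s \<le> g z0"
    using neg_polar_separation[OF Z C fx _ z0(2)] by blast
  have "scal f g x0 \<le> ereal (- g z0)" by (rule scal_le[where f = f and x = x0, OF z0(1)])
  also have "\<dots> < ereal (- g z0 + s)" using \<open>0 < s\<close> by simp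
  also have "\<dots> \<le> scal f g x"
  proof (rule scal_ge)
    fix z assume "z \<in> f x"
    then show "ereal (- g z0 + s) \<le> ereal (- g z)" using gap[OF _ C(2), of z] by simp
  qed
  finally show ?thesis using g by blast
qed

lemma minimal_iff_scal_less:
  fixes C :: "'z::{real_vector,t2_space} set" and f :: "'x \<Rightarrow> 'z set"
  assumes Z: "locally_convex_tvs TYPE('z)" and C: "cone C" "0 \<in> C"
    and polar_ne: "neg_polar C - {\<lambda>_. 0} \<noteq> {}" and f_G: "\<forall>x. f x \<in> GG C"
  shows "(\<forall>x. f x0 \<subseteq> f x \<longrightarrow> f x = f x0)
    \<longleftrightarrow> (\<forall>x. f x \<noteq> f x0 \<longrightarrow> (\<exists>zs \<in> neg_polar C - {\<lambda>_. 0}. scal f zs x0 < scal f zs x))"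
proof (intro iffI allI impI)
  fix x assume minimal: "\<forall>x. f x0 \<subseteq> f x \<longrightarrow> f x = f x0" and "f x \<noteq> f x0"
  then obtain z0 where "z0 \<in> f x0" "z0 \<notin> f x" by blast
  then show "\<exists>zs \<in> neg_polar C - {\<lambda>_. 0}. scal f zs x0 < scal f zs x"
    by (rule scal_less_if_not_subset[where f = f and x = x, OF Z C polar_ne spec[OF f_G]])
next
  fix x assume b: "\<forall>x. f x \<noteq> f x0 \<longrightarrow> (\<exists>zs \<in> neg_polar C - {\<lambda>_. 0}. scal f zs x0 < scal f zs x)"
    and "f x0 \<subseteq> f x"
  show "f x = f x0"
  proof (rule ccontr)
    assume "f x \<noteq> f x0"
    then obtain zs where "scal f zs x0 < scal f zs x" using b by blast
    then show False using scal_antimono[of f x0 x zs] \<open>f x0 \<subseteq> f x\<close> by simp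
  qed
qed

lemma zero_in_set_minus_inf_iff: "0 \<in> set_minus_inf A B \<longleftrightarrow> B \<subseteq> A"
  unfolding set_minus_inf_def by auto

theorem mainTheorem19:
  fixes C :: "'z::{real_vector,t2_space} set"
    and f :: "'x::real_vector \<Rightarrow> 'z set"
    and x0 :: 'x
  assumes Z: "locally_convex_tvs TYPE('z)"
    and C_closed: "closed C" and C_convex: "convex C" and C_cone: "cone C" and C_zero: "0 \<in> C"
    and polar_ne: "neg_polar C - {(\<lambda>_. 0)} \<noteq> {}"
    and f_G: "\<forall>x. f x \<in> GG C"
    and x0_dom: "x0 \<in> dom_sv f"
  shows
   "let a = (\<forall>x. f x0 \<subseteq> f x \<longrightarrow> f x = f x0);
        b = (\<forall>x. f x \<noteq> f x0 \<longrightarrow> (\<exists>zs \<in> neg_polar C - {(\<lambda>_. 0)}.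
                  scal f zs x0 < scal f zs x));
        c = (\<forall>x. f x \<noteq> f x0 \<longrightarrow> (\<exists>zs \<in> neg_polar C - {(\<lambda>_. 0)}.
                  scal f zs x \<noteq> -\<infinity> \<and> ereal_inf_diff (scal f zs x0) (scal f zs x) < 0));
        d = (\<forall>x. f x \<noteq> f x0 \<longrightarrow> (\<exists>zs \<in> neg_polar C - {(\<lambda>_. 0)}.
                  0 < ereal_inf_diff (scal f zs x) (scal f zs x0)));
        e = (\<forall>x. f x \<noteq> f x0 \<longrightarrow> 0 \<notin> set_minus_inf (f x) (f x0))
    in (a \<longleftrightarrow> b) \<and> (a \<longleftrightarrow> c) \<and> (a \<longleftrightarrow> d) \<and> (a \<longleftrightarrow> e)"
proof -
  have "scal f zs x0 \<noteq> \<infinity>" for zs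
    using scal_less_infinity[OF x0_dom] by simp
  note c_iff = ereal_inf_diff_neg_iff[OF this] and d_iff = ereal_inf_diff_pos_iff[OF this]
  show ?thesis
    unfolding Let_def c_iff d_iff zero_in_set_minus_inf_iff
    using minimal_iff_scal_less[OF Z C_cone C_zero polar_ne f_G] by blast
qed

end
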